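(* Let $k\in\mathbb Z$ and $u_0\in\Sigma^1_k$. Suppose there exist $T>0$ and a solution $u\in C^1([0,T),\Lambda^1_k)$ of $u_{xt}=\sin(u)$ with $u(0)=u_0$. Then \[ K_1(u_0):=\int_0^1\cos(u_0)\,\partial_x^{-1}\sin(u_0)\,dx=0 . \]
   Context: $\mathbb T=\mathbb R/\mathbb Z$, $H^m=H^m(\mathbb T,\mathbb R)$, $H_0^m$ is its mean-zero subspace, and $\partial_x^{-1}$ is the mean-zero antiderivative. For $k\in\mathbb Z$, $\Lambda^m_k$ is the set of $u:\mathbb R\to\mathbb R$ of the form $u(x)=2\pi kx+\mathring u(x)+c$ with $\mathring u\in H_0^m$ ($1$-periodically extended) and $c\in\mathbb R/2\pi\mathbb Z$. We set \[ \Sigma^1_k=\Big\{u\in\Lambda^1_k:\int_0^1\sin u\,dx=0=\int_0^1\cos u\,dx\Big\}. \] For $u\in\Sigma^1_k$, $\sin u$ is $1$-periodic with mean zero, so $\partial_x^{-1}\sin u$ is defined. A solution $u\in C^1([0,T),\Lambda^1_k)$ means a $C^1$ curve with $\partial_t u(t)\in H^1$ and $\partial_x\partial_t u(t)=\sin(u(t))$ for all $t$. *)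

theory Defs
  imports "HOL-Analysis.Analysis"
begin

text \<open>Functions on the torus are represented as 1-periodic functions on the real line.\<close>

definition periodic1 :: "(real \<Rightarrow> real) \<Rightarrow> bool" where
  "periodic1 f \<longleftrightarrow> (\<forall>x. f (x + 1) = f x)"

definition H1_wderiv :: "(real \<Rightarrow> real) \<Rightarrow> (real \<Rightarrow> real) \<Rightarrow> bool" where
  "H1_wderiv f g \<longleftrightarrow> periodic1 g \<and> g \<in> borel_measurable lborel \<and>
     set_integrable lborel {0..1} (\<lambda>x. (g x)^2) \<and>
     (\<forall>x. f x = f 0 + (LBINT s=0..x. g s))"

definition H1 :: "(real \<Rightarrow> real) \<Rightarrow> bool" where
  "H1 f \<longleftrightarrow> periodic1 f \<and> (\<exists>g. H1_wderiv f g)"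

definition H1_0 :: "(real \<Rightarrow> real) \<Rightarrow> bool" where
  "H1_0 f \<longleftrightarrow> H1 f \<and> (LBINT x=0..1. f x) = 0"

definition H1norm :: "(real \<Rightarrow> real) \<Rightarrow> real" where
  "H1norm f = sqrt ((LBINT x=0..1. (f x)^2) + (LBINT x=0..1. ((SOME g. H1_wderiv f g) x)^2))"

text \<open>Lambda^1_k (constant c taken as a real representative of R/2piZ)\<close>
definition Lambda1 :: "int \<Rightarrow> (real \<Rightarrow> real) \<Rightarrow> bool" where
  "Lambda1 k u \<longleftrightarrow> (\<exists>w c. H1_0 w \<and> (\<forall>x. u x = 2 * pi * real_of_int k * x + w x + c))"

definition Sigma1 :: "int \<Rightarrow> (real \<Rightarrow> real) \<Rightarrow> bool" where
  "Sigma1 k u \<longleftrightarrow> Lambda1 k u \<and> (LBINT x=0..1. sin (u x)) = 0 \<and> (LBINT x=0..1. cos (u x)) = 0"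

definition antideriv0 :: "(real \<Rightarrow> real) \<Rightarrow> real \<Rightarrow> real" where
  "antideriv0 f x = (LBINT s=0..x. f s) - (LBINT y=0..1. (LBINT s=0..y. f s))"

definition is_solution :: "int \<Rightarrow> real \<Rightarrow> (real \<Rightarrow> real \<Rightarrow> real) \<Rightarrow> bool" where
  "is_solution k T u \<longleftrightarrow>
     (\<forall>t\<in>{0..<T}. Lambda1 k (u t)) \<and>
     (\<exists>v. (\<forall>t\<in>{0..<T}. H1 (v t)) \<and>
          (\<forall>t\<in>{0..<T}. ((\<lambda>s. H1norm (\<lambda>x. (u s x - u t x) / (s - t) - v t x)) \<longlongrightarrow> 0)
                            (at t within {0..<T})) \<and>
          (\<forall>t\<in>{0..<T}. ((\<lambda>s. H1norm (\<lambda>x. v s x - v t x)) \<longlongrightarrow> 0) (at t within {0..<T})) \<and>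
          (\<forall>t\<in>{0..<T}. H1_wderiv (v t) (\<lambda>x. sin (u t x))))"

end

theory Submission
  imports Defs
begin

text \<open>Since \<open>\<partial>\<^sub>t u(t)\<close> is periodic with \<open>x\<close>-derivative \<open>sin u(t)\<close>, the mean of
  \<open>sin u(t)\<close> vanishes for every \<open>t\<close>. Differentiating this constraint at \<open>t = 0\<close>, with the
  time derivative taken in \<open>L\<^sup>2\<close>, gives \<open>\<integral> cos u\<^sub>0 \<cdot> \<partial>\<^sub>t u(0) = 0\<close>. Finally
  \<open>\<partial>\<^sub>t u(0)\<close> and \<open>\<partial>\<^sub>x\<^sup>-\<^sup>1 sin u\<^sub>0\<close> differ by a constant, which pairs to zero
  with \<open>cos u\<^sub>0\<close> because \<open>u\<^sub>0 \<in> \<Sigma>\<^sup>1\<^sub>k\<close>.\<close>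

lemma sin_add_sub_linear_bound: "\<bar>sin (b + h) - sin b - cos b * h\<bar> \<le> (h::real)^2"
proof -
  have "\<bar>sin h - h\<bar> \<le> h^2/2"
    using Maclaurin_sin_bound[of h 2] by (simp add: sin_coeff_def numeral_2_eq_2 power2_eq_square)
  moreover have "\<bar>cos h - 1\<bar> \<le> h^2/2"
  proof -
    have "(sin (h/2))^2 \<le> (h/2)^2"
      using abs_sin_x_le_abs_x[of "h/2"] by (metis abs_ge_zero power2_abs power_mono)
    then show ?thesis using cos_double_sin[of "h/2"] by (simp add: power_divide)
  qed
  moreover have "sin (b + h) - sin b - cos b * h = sin b * (cos h - 1) + cos b * (sin h - h)"
    by (simp add: sin_add algebra_simps)
  moreover have "\<bar>sin b * (cos h - 1)\<bar> \<le> \<bar>cos h - 1\<bar>" "\<bar>cos b * (sin h - h)\<bar> \<le> \<bar>sin h - h\<bar>"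
    by (simp_all add: abs_mult mult_left_le_one_le)
  ultimately show ?thesis by linarith
qed

text \<open>The term \<open>e + d\<^sup>2/e\<close> stands in for \<open>\<bar>d\<bar>\<close>, so that after integration only the
  \<open>L\<^sup>2\<close> distance of the difference quotient from \<open>w\<close> appears.\<close>
lemma sin_difference_quotient_bound:
  fixes a b s e w :: real
  assumes s: "s > 0" and e: "e > 0"
  shows "\<bar>(sin a - sin b) / s - cos b * w\<bar> \<le> (2 * s + 1 / e) * ((a - b) / s - w)^2 + 2 * s * w^2 + e"
proof -
  define q where "q = (a - b) / s"
  define d where "d = q - w"
  have "\<bar>sin a - sin b - cos b * (s * q)\<bar> \<le> (s * q)^2"
    using sin_add_sub_linear_bound[of b "s * q"] s by (simp add: q_def)
  then have taylor: "\<bar>(sin a - sin b) / s - cos b * q\<bar> \<le> s * q^2"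
    using s by (simp add: field_simps power2_eq_square abs_divide pos_divide_le_eq)
  have "\<bar>cos b * d\<bar> \<le> \<bar>d\<bar>"
    by (simp add: abs_mult mult_left_le_one_le)
  also have "\<bar>d\<bar> \<le> e + d^2 / e"
  proof -
    have "0 \<le> (\<bar>d\<bar> - e)^2" by simp
    then have "2 * (e * \<bar>d\<bar>) \<le> e^2 + d^2" by (simp add: power2_eq_square algebra_simps)
    moreover have "0 \<le> e * \<bar>d\<bar>" using e by simp
    ultimately have "e * \<bar>d\<bar> \<le> e^2 + d^2" by linarith
    then show ?thesis using e by (simp add: field_simps power2_eq_square)
  qed
  finally have linear: "\<bar>cos b * d\<bar> \<le> e + d^2 / e" .
  have "q^2 \<le> 2 * d^2 + 2 * w^2"
    using zero_le_power2[of "q - 2 * w"] by (simp add: d_def power2_eq_square algebra_simps)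
  then have "s * q^2 \<le> 2 * s * d^2 + 2 * s * w^2"
    using mult_left_mono[of "q^2" "2 * d^2 + 2 * w^2" s] s by (simp add: algebra_simps)
  moreover have "(sin a - sin b) / s - cos b * w = ((sin a - sin b) / s - cos b * q) + cos b * d"
    by (simp add: d_def algebra_simps)
  ultimately show ?thesis
    using taylor linear by (simp add: d_def q_def algebra_simps)
qed

lemma integral_cos_mul_derivative_eq_zero:
  fixes u :: "real \<Rightarrow> real \<Rightarrow> real" and u0 w :: "real \<Rightarrow> real"
  assumes u0: "continuous_on {0..1} u0" and w: "continuous_on {0..1} w"
    and curve: "\<forall>\<^sub>F s in at_right 0. continuous_on {0..1} (u s) \<and>
                  integral {0..1} (\<lambda>x. sin (u s x)) = integral {0..1} (\<lambda>x. sin (u0 x))"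
    and L2_deriv: "((\<lambda>s. integral {0..1} (\<lambda>x. ((u s x - u0 x) / s - w x)^2)) \<longlongrightarrow> 0) (at_right 0)"
  shows "integral {0..1} (\<lambda>x. cos (u0 x) * w x) = 0"
proof -
  define I where "I = integral {0..1} (\<lambda>x. cos (u0 x) * w x)"
  define D where "D = (\<lambda>s. integral {0..1} (\<lambda>x. ((u s x - u0 x) / s - w x)^2))"
  define V where "V = integral {0..1} (\<lambda>x. (w x)^2)"
  have "\<bar>I\<bar> \<le> 0 + e" if e: "e > 0" for e
  proof (rule tendsto_le[OF trivial_limit_at_right_real])
    show "((\<lambda>s. (2 * s + 1 / e) * D s + 2 * s * V + e) \<longlongrightarrow> 0 + e) (at_right 0)"
      using L2_deriv unfolding D_def
      by (auto intro!: tendsto_eq_intros simp: at_within_def[symmetric])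
    show "((\<lambda>_. \<bar>I\<bar>) \<longlongrightarrow> \<bar>I\<bar>) (at_right 0)" by simp
    show "\<forall>\<^sub>F s in at_right 0. \<bar>I\<bar> \<le> (2 * s + 1 / e) * D s + 2 * s * V + e"
      using curve eventually_at_right_less[of 0]
    proof eventually_elim
      case (elim s)
      then have s: "s > 0" and us: "continuous_on {0..1} (u s)"
        and sin_const: "integral {0..1} (\<lambda>x. sin (u s x)) = integral {0..1} (\<lambda>x. sin (u0 x))"
        by auto
      define d where "d = (\<lambda>x. (u s x - u0 x) / s - w x)"
      have "((\<lambda>x. (sin (u s x) - sin (u0 x)) / s - cos (u0 x) * w x) has_integral
          (integral {0..1} (\<lambda>x. sin (u s x)) - integral {0..1} (\<lambda>x. sin (u0 x))) / s - I) {0..1}"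
        unfolding I_def using us u0 w
        by (intro has_integral_diff has_integral_divide integrable_integral
            integrable_continuous_interval continuous_intros)
      then have quotient: "((\<lambda>x. (sin (u s x) - sin (u0 x)) / s - cos (u0 x) * w x) has_integral - I) {0..1}"
        by (simp add: sin_const)
      have bound: "((\<lambda>x. (2 * s + 1 / e) * (d x)^2 + 2 * s * (w x)^2 + e) has_integral
          (2 * s + 1 / e) * D s + 2 * s * V + e) {0..1}"
        unfolding D_def V_def d_def using us u0 w s
        by (intro has_integral_add has_integral_mult_right integrable_integral
            integrable_continuous_interval continuous_intros)
           (auto intro: has_integral_const_real[THEN has_integral_eq_rhs])
      have pointwise: "\<bar>(sin (u s x) - sin (u0 x)) / s - cos (u0 x) * w x\<bar>
          \<le> (2 * s + 1 / e) * (d x)^2 + 2 * s * (w x)^2 + e" for x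
        unfolding d_def using sin_difference_quotient_bound[OF s e] by simp
      have "norm (- I) \<le> ((2 * s + 1 / e) * D s + 2 * s * V + e) \<bullet> 1"
        by (rule has_integral_norm_bound_integral_component[OF quotient bound]) (simp add: pointwise)
      then show ?case by simp
    qed
  qed
  then have "\<bar>I\<bar> \<le> 0" by (rule field_le_epsilon)
  then show ?thesis unfolding I_def by simp
qed

lemma interval_lebesgue_integral_01_eq_integral:
  fixes f :: "real \<Rightarrow> real"
  assumes "continuous_on {0..1} f"
  shows "(LBINT x=0..1. f x) = integral {0..1} f"
proof -
  have "(LBINT x=0..1. f x) = (LBINT x:{0..1}. f x)"
    using interval_integral_Icc[of 0 1 f] by (simp add: zero_ereal_def one_ereal_def)
  also have "\<dots> = integral {0..1} f"
    using assms by (intro set_borel_integral_eq_integral(2) borel_integrable_atLeastAtMost')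
  finally show ?thesis .
qed

lemma H1_wderiv_set_integrable:
  assumes "H1_wderiv f g"
  shows "set_integrable lborel {0..1} g"
proof (rule set_integrable_bound)
  have "set_integrable lborel {0..1::real} (\<lambda>_. 1::real)"
    by (rule borel_integrable_atLeastAtMost') simp
  then show "set_integrable lborel {0..1} (\<lambda>x. 1 + (g x)^2)"
    using assms unfolding H1_wderiv_def by (intro set_integral_add(1)) auto
  have "g \<in> borel_measurable lborel"
    using assms unfolding H1_wderiv_def by blast
  then show "set_borel_measurable lborel {0..1} g"
    unfolding set_borel_measurable_def by measurable
  have "\<bar>a\<bar> \<le> 1 + a^2" for a :: real
    using zero_le_power2[of "\<bar>a\<bar> - 1"] by (simp add: power2_eq_square algebra_simps)
  then show "AE x\<in>{0..1} in lborel. norm (g x) \<le> norm (1 + (g x)^2)"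
    by simp
qed

lemma H1_wderiv_continuous_on:
  assumes "H1_wderiv f g"
  shows "continuous_on {0..1} f"
proof -
  have g: "set_integrable lborel {0..1} g"
    using assms by (rule H1_wderiv_set_integrable)
  have "f x = f 0 + integral {0..x} g" if "x \<in> {0..1}" for x
  proof -
    have "f x = f 0 + (LBINT s=0..x. g s)"
      using assms unfolding H1_wderiv_def by blast
    also have "(LBINT s=0..x. g s) = (LBINT s:{0..x}. g s)"
      using interval_integral_Icc[of 0 x g] that by (simp add: zero_ereal_def)
    also have "(LBINT s:{0..x}. g s) = integral {0..x} g"
      using that by (intro set_borel_integral_eq_integral(2) set_integrable_subset[OF g]) auto
    finally show ?thesis .
  qed
  moreover have "continuous_on {0..1} (\<lambda>x. f 0 + integral {0..x} g)"
    using g by (intro continuous_intros indefinite_integral_continuous_1 set_borel_integral_eq_integral(1))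
  ultimately show ?thesis
    by (metis (no_types, lifting) continuous_on_eq)
qed

lemma H1_continuous_on: "H1 f \<Longrightarrow> continuous_on {0..1} f"
  unfolding H1_def using H1_wderiv_continuous_on by blast

lemma Lambda1_continuous_on:
  assumes "Lambda1 k u"
  shows "continuous_on {0..1} u"
proof -
  obtain w c where "H1_0 w" and u: "u = (\<lambda>x. 2 * pi * real_of_int k * x + w x + c)"
    using assms unfolding Lambda1_def by blast
  then have "continuous_on {0..1} w"
    unfolding H1_0_def using H1_continuous_on by blast
  then show ?thesis
    unfolding u by (intro continuous_intros)
qed

lemma H1_wderiv_periodic_integral_eq_0:
  assumes "periodic1 f" and "H1_wderiv f g"
  shows "(LBINT x=0..1. g x) = 0"
proof -
  have "f 1 = f 0 + (LBINT x=0..1. g x)"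
    using assms(2) unfolding H1_wderiv_def one_ereal_def by blast
  moreover have "f 1 = f 0"
    using assms(1) unfolding periodic1_def by (metis add_0_left)
  ultimately show ?thesis by simp
qed

lemma antideriv0_eq_sub_mean:
  assumes "H1_wderiv f g"
  shows "antideriv0 g x = f x - (LBINT y=0..1. f y)"
proof -
  have antider: "(LBINT s=0..y. g s) = f y - f 0" for y
    using assms unfolding H1_wderiv_def by (metis add_diff_cancel_left')
  have f: "continuous_on {0..1} f"
    using assms by (rule H1_wderiv_continuous_on)
  have "(LBINT y=0..1. f y - f 0) = integral {0..1} (\<lambda>y. f y - f 0)"
    using f by (intro interval_lebesgue_integral_01_eq_integral continuous_intros)
  also have "\<dots> = integral {0..1} f - f 0"
    using f by (simp add: integral_diff integrable_continuous_interval)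
  also have "\<dots> = (LBINT y=0..1. f y) - f 0"
    using f by (simp add: interval_lebesgue_integral_01_eq_integral)
  finally show ?thesis
    unfolding antideriv0_def antider by simp
qed

lemma interval_lebesgue_integral_01_square_nonneg: "0 \<le> (LBINT x=0..1. (f x)^2 :: real)"
  using interval_integral_Icc[of 0 1 "\<lambda>x. (f x)^2"]
  by (simp add: zero_ereal_def one_ereal_def set_lebesgue_integral_def integral_nonneg_AE)

lemma integral_square_le_H1norm_square:
  assumes "continuous_on {0..1} h"
  shows "integral {0..1} (\<lambda>x. (h x)^2) \<le> (H1norm h)^2"
proof -
  have "integral {0..1} (\<lambda>x. (h x)^2) = (LBINT x=0..1. (h x)^2)"
    using assms by (intro interval_lebesgue_integral_01_eq_integral[symmetric] continuous_intros)
  moreover have "(H1norm h)^2 = (LBINT x=0..1. (h x)^2) + (LBINT x=0..1. ((SOME g. H1_wderiv h g) x)^2)"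
    unfolding H1norm_def
    by (simp add: add_nonneg_nonneg interval_lebesgue_integral_01_square_nonneg)
  ultimately show ?thesis
    using interval_lebesgue_integral_01_square_nonneg by simp
qed

lemma integral_square_tendsto_0_of_H1norm_tendsto_0:
  assumes "((\<lambda>s. H1norm (h s)) \<longlongrightarrow> 0) F"
    and "\<forall>\<^sub>F s in F. continuous_on {0..1} (h s)"
  shows "((\<lambda>s. integral {0..1} (\<lambda>x. (h s x)^2)) \<longlongrightarrow> 0) F"
proof (rule tendsto_sandwich[where f = "\<lambda>_. 0" and h = "\<lambda>s. (H1norm (h s))^2"])
  show "\<forall>\<^sub>F s in F. 0 \<le> integral {0..1} (\<lambda>x. (h s x)^2)"
    using assms(2) by eventually_elim (simp add: integral_nonneg integrable_continuous_interval continuous_intros)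
  show "\<forall>\<^sub>F s in F. integral {0..1} (\<lambda>x. (h s x)^2) \<le> (H1norm (h s))^2"
    using assms(2) by eventually_elim (rule integral_square_le_H1norm_square)
  show "((\<lambda>s. (H1norm (h s))^2) \<longlongrightarrow> 0) F"
    using tendsto_power[OF assms(1), of 2] by simp
qed simp

lemma integral_mul_antideriv0_mean_zero:
  assumes "H1_wderiv f g" and c: "continuous_on {0..1} c" and c_mean: "(LBINT x=0..1. c x) = 0"
  shows "(LBINT x=0..1. c x * antideriv0 g x) = integral {0..1} (\<lambda>x. c x * f x)"
proof -
  define m where "m = (LBINT x=0..1. f x)"
  have f: "continuous_on {0..1} f"
    using assms(1) by (rule H1_wderiv_continuous_on)
  have "(LBINT x=0..1. c x * antideriv0 g x) = (LBINT x=0..1. c x * f x - c x * m)"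
    using antideriv0_eq_sub_mean[OF assms(1)] by (simp add: m_def right_diff_distrib)
  also have "\<dots> = integral {0..1} (\<lambda>x. c x * f x - c x * m)"
    using c f by (intro interval_lebesgue_integral_01_eq_integral continuous_intros)
  also have "\<dots> = integral {0..1} (\<lambda>x. c x * f x) - integral {0..1} c * m"
    using c f by (simp add: integral_diff integrable_continuous_interval continuous_intros)
  also have "integral {0..1} c = 0"
    using c c_mean by (simp add: interval_lebesgue_integral_01_eq_integral)
  finally show ?thesis by simp
qed

lemma is_solution_integral_cos_mul_time_derivative:
  assumes "is_solution k T u" and "T > 0"
  obtains v where "H1_wderiv v (\<lambda>x. sin (u 0 x))" and "integral {0..1} (\<lambda>x. cos (u 0 x) * v x) = 0"
proof -
  obtain v where v: "\<forall>t\<in>{0..<T}. H1 (v t)"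
    and time_deriv: "\<forall>t\<in>{0..<T}. ((\<lambda>s. H1norm (\<lambda>x. (u s x - u t x) / (s - t) - v t x)) \<longlongrightarrow> 0)
                                   (at t within {0..<T})"
    and space_deriv: "\<forall>t\<in>{0..<T}. H1_wderiv (v t) (\<lambda>x. sin (u t x))"
    using assms(1) unfolding is_solution_def by blast
  have u: "continuous_on {0..1} (u t)" if "t \<in> {0..<T}" for t
    using assms(1) that Lambda1_continuous_on unfolding is_solution_def by blast
  have sin_mean: "integral {0..1} (\<lambda>x. sin (u t x)) = 0" if "t \<in> {0..<T}" for t
  proof -
    have "(LBINT x=0..1. sin (u t x)) = 0"
      using H1_wderiv_periodic_integral_eq_0 v space_deriv that unfolding H1_def by blast
    then show ?thesis
      using interval_lebesgue_integral_01_eq_integral[OF continuous_on_sin[OF u[OF that]]] by simp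
  qed
  have u0: "continuous_on {0..1} (u 0)" and v0: "continuous_on {0..1} (v 0)"
    using u v assms(2) H1_continuous_on by auto
  have "at 0 within {0..<T} = at_right (0::real)"
    by (rule at_within_nhd[of _ "{..<T}"]) (use assms(2) in auto)
  then have "((\<lambda>s. H1norm (\<lambda>x. (u s x - u 0 x) / s - v 0 x)) \<longlongrightarrow> 0) (at_right 0)"
    using bspec[OF time_deriv, of 0] assms(2) by simp
  moreover have near_0: "\<forall>\<^sub>F s in at_right 0. s \<in> {0<..<T}"
    using eventually_at_right_real[OF assms(2)] .
  then have "\<forall>\<^sub>F s in at_right 0. continuous_on {0..1} (\<lambda>x. (u s x - u 0 x) / s - v 0 x)"
    by eventually_elim (auto intro!: continuous_intros u u0 v0)
  ultimately have "((\<lambda>s. integral {0..1} (\<lambda>x. ((u s x - u 0 x) / s - v 0 x)^2)) \<longlongrightarrow> 0) (at_right 0)"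
    by (rule integral_square_tendsto_0_of_H1norm_tendsto_0)
  moreover have "\<forall>\<^sub>F s in at_right 0. continuous_on {0..1} (u s) \<and>
      integral {0..1} (\<lambda>x. sin (u s x)) = integral {0..1} (\<lambda>x. sin (u 0 x))"
    using near_0 by eventually_elim (use assms(2) u sin_mean in auto)
  ultimately have "integral {0..1} (\<lambda>x. cos (u 0 x) * v 0 x) = 0"
    using integral_cos_mul_derivative_eq_zero[OF u0 v0] by blast
  moreover have "H1_wderiv (v 0) (\<lambda>x. sin (u 0 x))"
    using space_deriv assms(2) by simp
  ultimately show ?thesis using that by blast
qed

theorem lemma4p1:
  fixes k :: int and u0 :: "real \<Rightarrow> real" and T :: real and u :: "real \<Rightarrow> real \<Rightarrow> real"
  assumes "Sigma1 k u0"
    and "T > 0"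
    and "is_solution k T u"
    and "u 0 = u0"
  shows "(LBINT x=0..1. cos (u0 x) * antideriv0 (\<lambda>y. sin (u0 y)) x) = 0"
proof -
  obtain v where v: "H1_wderiv v (\<lambda>x. sin (u0 x))" and "integral {0..1} (\<lambda>x. cos (u0 x) * v x) = 0"
    using is_solution_integral_cos_mul_time_derivative[OF assms(3,2)] assms(4) by blast
  moreover have "continuous_on {0..1} (\<lambda>x. cos (u0 x))"
    using assms(1) Lambda1_continuous_on unfolding Sigma1_def by (intro continuous_intros) blast
  moreover have "(LBINT x=0..1. cos (u0 x)) = 0"
    using assms(1) unfolding Sigma1_def by blast
  ultimately show ?thesis
    using integral_mul_antideriv0_mean_zero[OF v] by simp
qed

end
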